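(* For every $t>0$ and every fixed 2-dimensional linear subspace $L$, $$\mathrm{Cov}_V\bigl(\overline{\mathrm{cr}}(G_L),\mathrm{stress}(G,G_L)\bigr)\ge\frac{t^5}{16}\int_W I_W(v)\int_W w(v,v_1)\bigl(d_0(v,v_1)-d_L(v,v_1)\bigr)^2\,dv_1\,dv,$$ where $$I_W(v)=\int_{W^3}\mathbf 1\bigl([v,v_2]|_L\cap[v_3,v_4]|_L\neq\emptyset\bigr)\mathbf 1(\|v-v_2\|\le\delta_t)\mathbf 1(\|v_3-v_4\|\le\delta_t)\,dv_2dv_3dv_4.$$
   Context: Let $W\subset\mathbb{R}^d$ ($d\ge2$) be a compact convex set with $\mathrm{vol}_d(W)=1$; for $t>0$, $V$ is a Poisson point process of intensity $t$ on $W$ (draw $N\sim\mathrm{Poisson}(t)$, then $N$ i.i.d. uniform points in $W$); $\delta_t>0$. The graph $G$ has vertex set $V$ and a straight-segment edge between distinct $u,v\in V$ iff $\|u-v\|\le\delta_t$. For a 2-dimensional linear subspace $L$, $x|_L$ denotes orthogonal projection onto $L$, $[u,v]$ the segment from $u$ to $v$, and $V^k_{\neq}$ ordered $k$-tuples of pairwise distinct points of $V$. Define $$\overline{\mathrm{cr}}(G_L)=\tfrac18\sum_{(v_1,\dots,v_4)\in V^4_{\neq}}\mathbf 1\bigl([v_1,v_2]|_L\cap[v_3,v_4]|_L\neq\emptyset\bigr)\mathbf 1(\|v_1-v_2\|\le\delta_t)\mathbf 1(\|v_3-v_4\|\le\delta_t),$$ $$\mathrm{stress}(G,G_L)=\tfrac12\sum_{(v_1,v_2)\in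 V^2_{\neq}}w(v_1,v_2)\bigl(d_0(v_1,v_2)-d_L(v_1,v_2)\bigr)^2,$$ with $w:W\times W\to(0,\infty)$ measurable, $d_0(v_1,v_2)=\|v_1-v_2\|$, $d_L(v_1,v_2)=\|v_1|_L-v_2|_L\|$. Assume $\mathrm{stress}(G,G_L)$ has finite second moment. *)

theory Defs
  imports "HOL-Analysis.Analysis" "HOL-Probability.Probability"
begin

definition proj :: "'a::euclidean_space set \<Rightarrow> 'a \<Rightarrow> 'a" where
  "proj L x = (THE y. y \<in> L \<and> (\<forall>z\<in>L. inner (x - y) z = 0))"

text \<open>Poisson point process of intensity t on W (with vol W = 1):
  outcome (N, X) with N ~ Poisson(t), X i.i.d. uniform on W, independent;
  the point set is V = {X i | i < N}.\<close>
definition ppp :: "real \<Rightarrow> 'a::euclidean_space set \<Rightarrow> (nat \<times> (nat \<Rightarrow> 'a)) measure" where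
  "ppp t W = measure_pmf (poisson_pmf t) \<Otimes>\<^sub>M (\<Pi>\<^sub>M i\<in>UNIV. uniform_measure lborel W)"

definition cr_bar :: "'a::euclidean_space set \<Rightarrow> real \<Rightarrow> nat \<times> (nat \<Rightarrow> 'a) \<Rightarrow> real" where
  "cr_bar L \<delta> \<omega> = (case \<omega> of (N, X) \<Rightarrow>
     1/8 * (\<Sum>(i,j,k,l) \<in> {(i,j,k,l). i < N \<and> j < N \<and> k < N \<and> l < N \<and> distinct [i,j,k,l]}.
        of_bool (proj L ` closed_segment (X i) (X j) \<inter> proj L ` closed_segment (X k) (X l) \<noteq> {})
        * of_bool (norm (X i - X j) \<le> \<delta>) * of_bool (norm (X k - X l) \<le> \<delta>)))"

definition stress :: "'a::euclidean_space set \<Rightarrow> ('a \<Rightarrow> 'a \<Rightarrow> real) \<Rightarrow> nat \<times> (nat \<Rightarrow> 'a) \<Rightarrow> real" where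
  "stress L w \<omega> = (case \<omega> of (N, X) \<Rightarrow>
     1/2 * (\<Sum>(i,j) \<in> {(i,j). i < N \<and> j < N \<and> i \<noteq> j}.
        w (X i) (X j) * (norm (X i - X j) - norm (proj L (X i) - proj L (X j)))\<^sup>2))"

definition cov :: "'b measure \<Rightarrow> ('b \<Rightarrow> real) \<Rightarrow> ('b \<Rightarrow> real) \<Rightarrow> real" where
  "cov M X Y = (\<integral>\<omega>. (X \<omega> - (\<integral>x. X x \<partial>M)) * (Y \<omega> - (\<integral>x. Y x \<partial>M)) \<partial>M)"

definition I_W :: "'a::euclidean_space set \<Rightarrow> 'a set \<Rightarrow> real \<Rightarrow> 'a \<Rightarrow> real" where
  "I_W W L \<delta> v = (LINT v2:W|lborel. LINT v3:W|lborel. LINT v4:W|lborel.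
      of_bool (proj L ` closed_segment v v2 \<inter> proj L ` closed_segment v3 v4 \<noteq> {})
      * of_bool (norm (v - v2) \<le> \<delta>) * of_bool (norm (v3 - v4) \<le> \<delta>))"

end

theory Submission
  imports Defs
begin

text \<open>Both statistics are sums over lists of distinct points of the process: \<open>cr_bar\<close> over
  4-lists and the stress over 2-lists, so their product is a sum over pairs of such lists. All
  summands being nonnegative, it dominates the sum over the pairs with six distinct points plus
  the sum over the pairs whose 2-list consists of the first point of the 4-list and a new point.
  By the multivariate Mecke formula, which turns the expected sum of a functional over the
  \<open>m\<close>-lists of distinct points into \<open>t ^ m\<close> times its integral over \<open>W ^ m\<close>, the first
  part has exactly the expectation \<open>E cr_bar * E stress\<close>, and the second one has expectation
  \<open>t ^ 5 / 16\<close> times the integral on the right-hand side.\<close>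

section \<open>Lists of distinct indices\<close>

definition distinct_index_lists :: "nat \<Rightarrow> nat \<Rightarrow> nat list set" where
  "distinct_index_lists m n = {xs. length xs = m \<and> distinct xs \<and> set xs \<subseteq> {..<n}}"

lemma finite_distinct_index_lists: "finite (distinct_index_lists m n)"
proof (rule finite_subset)
  show "distinct_index_lists m n \<subseteq> {xs. set xs \<subseteq> {..<n} \<and> length xs = m}"
    unfolding distinct_index_lists_def by blast
qed (simp add: finite_lists_length_eq)

lemma card_distinct_index_lists_le: "card (distinct_index_lists m n) \<le> n ^ m"
proof -
  have "card (distinct_index_lists m n) \<le> card {xs. set xs \<subseteq> {..<n} \<and> length xs = m}"
    by (rule card_mono) (auto simp: distinct_index_lists_def intro: finite_lists_length_eq)
  also have "\<dots> = n ^ m" by (simp add: card_lists_length_eq)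
  finally show ?thesis .
qed

lemma real_card_distinct_index_lists:
  "real (card (distinct_index_lists m n)) = (if m \<le> n then fact n / fact (n - m) else 0)"
proof (cases "m \<le> n")
  case True
  have "card (distinct_index_lists m n) = \<Prod>{n - m + 1 .. n}"
    using card_lists_distinct_length_eq[of "{..<n}" m] True
    unfolding distinct_index_lists_def by simp
  moreover have "(fact n :: nat) = fact (n - m) * \<Prod>{Suc (n - m) .. n}"
    by (rule fact_eq_fact_times) simp
  then have "(fact n :: real) = fact (n - m) * real (\<Prod>{Suc (n - m) .. n})"
    by (metis of_nat_fact of_nat_mult)
  ultimately show ?thesis using True by simp
next
  case False
  have "distinct_index_lists m n = {}"
  proof (rule ccontr)
    assume "distinct_index_lists m n \<noteq> {}"
    then obtain xs where xs: "length xs = m" "distinct xs" "set xs \<subseteq> {..<n}"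
      unfolding distinct_index_lists_def by blast
    have "card (set xs) \<le> card {..<n}" using xs(3) by (rule card_mono[rotated]) simp
    then show False using xs False distinct_card[of xs] by simp
  qed
  then show ?thesis using False by simp
qed

lemma distinct_index_lists_take:
  "xs \<in> distinct_index_lists m n \<Longrightarrow> k \<le> m \<Longrightarrow> take k xs \<in> distinct_index_lists k n"
  unfolding distinct_index_lists_def by (auto dest: in_set_takeD)

lemma distinct_index_lists_drop:
  "xs \<in> distinct_index_lists m n \<Longrightarrow> drop k xs \<in> distinct_index_lists (m - k) n"
  unfolding distinct_index_lists_def by (auto dest: in_set_dropD)

text \<open>A 6-list \<open>zs\<close> encodes the pair \<open>(take 4 zs, drop 4 zs)\<close> of disjoint lists, a 5-list
  \<open>zs\<close> encodes \<open>(take 4 zs, [zs!0, zs!4])\<close>, whose 2-list shares its first point with the 4-list.\<close>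

lemma distinct_index_lists_first_and_5th:
  assumes "zs \<in> distinct_index_lists 5 n"
  shows "[zs!0, zs!4] \<in> distinct_index_lists 2 n"
proof -
  have zs: "length zs = 5" "distinct zs" "set zs \<subseteq> {..<n}"
    using assms by (simp_all add: distinct_index_lists_def)
  have "zs!0 \<in> set zs" "zs!4 \<in> set zs" using zs(1) by (simp_all add: nth_mem)
  then have "zs!0 < n" "zs!4 < n" using zs(3) by auto
  moreover have "zs!0 \<noteq> zs!4" using zs by (simp add: nth_eq_iff_index_eq)
  ultimately show ?thesis unfolding distinct_index_lists_def by auto
qed

lemma take_drop_6_neq_take_first_and_5th:
  assumes "x \<in> distinct_index_lists 6 n" and "y \<in> distinct_index_lists 5 n"
  shows "(take 4 x, drop 4 x) \<noteq> (take 4 y, [y!0, y!4])"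
proof
  assume "(take 4 x, drop 4 x) = (take 4 y, [y!0, y!4])"
  then have eqs: "take 4 x = take 4 y" "drop 4 x = [y!0, y!4]" by simp_all
  have "length y = 5" using assms(2) by (simp add: distinct_index_lists_def)
  then have "y!0 \<in> set (take 4 x)" using nth_mem[of 0 "take 4 y"] eqs(1) by simp
  moreover have "y!0 \<in> set (drop 4 x)" using eqs(2) by simp
  moreover have "distinct (take 4 x @ drop 4 x)" using assms(1) by (simp add: distinct_index_lists_def)
  ultimately show False by (simp only: distinct_append) blast
qed

lemma sum_distinct_index_lists_4_times_2_ge:
  fixes a b :: "nat list \<Rightarrow> real"
  assumes a: "\<And>xs. 0 \<le> a xs" and b: "\<And>xs. 0 \<le> b xs"
  shows "(\<Sum>zs\<in>distinct_index_lists 6 n. a (take 4 zs) * b (drop 4 zs))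
       + (\<Sum>zs\<in>distinct_index_lists 5 n. a (take 4 zs) * b [zs!0, zs!4])
       \<le> (\<Sum>xs\<in>distinct_index_lists 4 n. a xs) * (\<Sum>ys\<in>distinct_index_lists 2 n. b ys)"
proof -
  define disjoint where "disjoint zs = (take 4 zs, drop 4 zs)" for zs :: "nat list"
  define sharing where "sharing zs = (take 4 zs, [zs!0, zs!4])" for zs :: "nat list"
  let ?P = "distinct_index_lists 4 n \<times> distinct_index_lists 2 n"
  let ?f = "\<lambda>p. a (fst p) * b (snd p)"
  have sub_disjoint: "disjoint ` distinct_index_lists 6 n \<subseteq> ?P"
    using distinct_index_lists_take[of _ 6 n 4] distinct_index_lists_drop[of _ 6 n 4]
    by (auto simp: disjoint_def)
  have sub_sharing: "sharing ` distinct_index_lists 5 n \<subseteq> ?P"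
    unfolding sharing_def using distinct_index_lists_take distinct_index_lists_first_and_5th by force
  have inj_disjoint: "inj_on disjoint (distinct_index_lists 6 n)"
    unfolding disjoint_def inj_on_def by (metis append_take_drop_id prod.inject)
  have inj_sharing: "inj_on sharing (distinct_index_lists 5 n)"
  proof (rule inj_onI)
    fix x y assume "x \<in> distinct_index_lists 5 n" "y \<in> distinct_index_lists 5 n"
      and eq: "sharing x = sharing y"
    then have "length x = 5" "length y = 5" by (simp_all add: distinct_index_lists_def)
    then have "x = take 4 x @ [x!4]" "y = take 4 y @ [y!4]"
      using take_Suc_conv_app_nth[of 4 x] take_Suc_conv_app_nth[of 4 y] by simp_all
    then show "x = y" using eq unfolding sharing_def by (metis list.inject prod.inject)
  qed
  have images_disjoint: "disjoint ` distinct_index_lists 6 n \<inter> sharing ` distinct_index_lists 5 n = {}"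
    using take_drop_6_neq_take_first_and_5th unfolding disjoint_def sharing_def by fast
  have "(\<Sum>zs\<in>distinct_index_lists 6 n. a (take 4 zs) * b (drop 4 zs))
      + (\<Sum>zs\<in>distinct_index_lists 5 n. a (take 4 zs) * b [zs!0, zs!4])
      = sum ?f (disjoint ` distinct_index_lists 6 n) + sum ?f (sharing ` distinct_index_lists 5 n)"
    unfolding sum.reindex[OF inj_disjoint] sum.reindex[OF inj_sharing]
    by (simp add: disjoint_def sharing_def)
  also have "\<dots> = sum ?f (disjoint ` distinct_index_lists 6 n \<union> sharing ` distinct_index_lists 5 n)"
    by (rule sum.union_disjoint[symmetric]) (simp_all add: finite_distinct_index_lists images_disjoint)
  also have "\<dots> \<le> sum ?f ?P"
    by (rule sum_mono2) (use sub_disjoint sub_sharing a b in \<open>auto simp: finite_distinct_index_lists\<close>)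
  also have "\<dots> = (\<Sum>xs\<in>distinct_index_lists 4 n. a xs) * (\<Sum>ys\<in>distinct_index_lists 2 n. b ys)"
    by (simp add: sum_product sum.cartesian_product case_prod_beta)
  finally show ?thesis .
qed

section \<open>Moments of the Poisson distribution\<close>

lemma nn_integral_poisson_card_distinct_index_lists:
  assumes "0 < t"
  shows "(\<integral>\<^sup>+n. ennreal (real (card (distinct_index_lists m n))) \<partial>poisson_pmf t) = ennreal (t ^ m)"
proof -
  define a where "a n = pmf (poisson_pmf t) n * real (card (distinct_index_lists m n))" for n
  have a_below: "a n = 0" if "n < m" for n
    using that by (simp add: a_def real_card_distinct_index_lists)
  have a_shift: "a (k + m) = t ^ m * exp (-t) * (t ^ k / fact k)" for k
    using assms by (simp add: a_def real_card_distinct_index_lists power_add)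
  have "(\<lambda>k. t ^ k / fact k) sums exp t"
    using exp_converges[of t] by (simp add: divide_inverse_commute)
  then have "(\<lambda>k. a (k + m)) sums (t ^ m * exp (-t) * exp t)"
    unfolding a_shift by (rule sums_mult)
  moreover have "t ^ m * exp (-t) * exp t = t ^ m"
    by (simp add: mult.assoc mult_exp_exp)
  ultimately have "a sums (t ^ m)"
    by (simp add: sums_iff_shift a_below)
  moreover have "0 \<le> a n" for n by (simp add: a_def)
  ultimately have "(\<Sum>n. ennreal (a n)) = ennreal (t ^ m)"
    using assms by (intro sums_unique[symmetric]) simp
  then show ?thesis
    by (simp add: nn_integral_measure_pmf nn_integral_count_space_nat a_def ennreal_mult)
qed

lemma nn_integral_poisson_exp:
  assumes "0 < t"
  shows "(\<integral>\<^sup>+n. ennreal (exp (real n)) \<partial>poisson_pmf t) = ennreal (exp (t * (exp 1 - 1)))"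
proof -
  define a where "a n = pmf (poisson_pmf t) n * exp (real n)" for n
  have "a = (\<lambda>n. exp (-t) * ((t * exp 1) ^ n / fact n))"
    using assms by (simp add: fun_eq_iff a_def power_mult_distrib flip: exp_of_nat_mult)
  moreover have "(\<lambda>n. (t * exp 1) ^ n / fact n) sums exp (t * exp 1)"
    using exp_converges[of "t * exp 1"] by (simp add: divide_inverse_commute)
  ultimately have "a sums (exp (-t) * exp (t * exp 1))"
    by (simp only: sums_mult)
  moreover have "exp (-t) * exp (t * exp 1) = exp (t * (exp 1 - 1))"
    by (simp add: mult_exp_exp algebra_simps)
  moreover have "0 \<le> a n" for n by (simp add: a_def)
  ultimately have "(\<Sum>n. ennreal (a n)) = ennreal (exp (t * (exp 1 - 1)))"
    by (intro sums_unique[symmetric]) simp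
  then show ?thesis
    by (simp add: nn_integral_measure_pmf nn_integral_count_space_nat a_def ennreal_mult)
qed

lemma power_le_fact_mult_exp:
  assumes "0 \<le> (x::real)"
  shows "x ^ k \<le> fact k * exp x"
proof -
  have sums: "(\<lambda>j. x ^ j / fact j) sums exp x"
    using exp_converges[of x] by (simp add: divide_inverse_commute)
  have "(\<Sum>j\<in>{k}. x ^ j / fact j) \<le> (\<Sum>j. x ^ j / fact j)"
    by (rule sum_le_suminf) (use sums assms in \<open>auto simp: sums_iff\<close>)
  then have "x ^ k / fact k \<le> exp x" using sums by (simp add: sums_iff)
  then show ?thesis by (simp add: pos_divide_le_eq mult.commute)
qed

section \<open>Projected segments\<close>

lemma proj_eq_sum_orthonormal_basis:
  fixes L :: "'a::euclidean_space set"
  assumes L: "subspace L"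
  obtains B where "finite B" "\<And>x. proj L x = (\<Sum>b\<in>B. (x \<bullet> b) *\<^sub>R b)"
proof -
  obtain B where B: "B \<subseteq> L" "pairwise orthogonal B" "\<And>x. x \<in> B \<Longrightarrow> norm x = 1"
       "independent B" "span B = L"
    using orthonormal_basis_subspace[OF L] by metis
  have fin: "finite B" using B(4) by (rule independent_imp_finite)
  have "proj L x = (\<Sum>b\<in>B. (x \<bullet> b) *\<^sub>R b)" for x
  proof -
    define P where "P = (\<Sum>b\<in>B. (x \<bullet> b) *\<^sub>R b)"
    have P_in_L: "P \<in> L" unfolding P_def B(5)[symmetric]
      by (intro span_sum span_scale span_base) auto
    have orth_B: "(x - P) \<bullet> c = 0" if c: "c \<in> B" for c
    proof -
      have "P \<bullet> c = (\<Sum>b\<in>B. (x \<bullet> b) * (b \<bullet> c))"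
        unfolding P_def by (simp add: inner_sum_left)
      also have "\<dots> = (\<Sum>b\<in>{c}. (x \<bullet> b) * (b \<bullet> c))"
        using c fin B(2) unfolding pairwise_def orthogonal_def
        by (intro sum.mono_neutral_right) auto
      also have "\<dots> = x \<bullet> c" using B(3)[OF c] by (simp add: norm_eq_1)
      finally show ?thesis by (simp add: inner_diff_left)
    qed
    have orth_L: "(x - P) \<bullet> z = 0" if "z \<in> L" for z
      using orthogonal_to_span[of z B "x - P"] that B(5) orth_B by (auto simp: orthogonal_def)
    have "y = P" if y: "y \<in> L" "\<forall>z\<in>L. (x - y) \<bullet> z = 0" for y
    proof -
      have "y - P \<in> L" using y(1) P_in_L L by (simp add: subspace_diff)
      then have "(x - P) \<bullet> (y - P) - (x - y) \<bullet> (y - P) = 0" using orth_L y(2) by simp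
      then have "(y - P) \<bullet> (y - P) = 0"
        by (simp add: inner_diff_left inner_diff_right inner_commute)
      then show ?thesis by simp
    qed
    then show "proj L x = P" unfolding proj_def
      by (intro the1_equality) (use P_in_L orth_L in blast)+
  qed
  with fin show ?thesis by (rule that)
qed

lemma continuous_on_proj:
  fixes L :: "'a::euclidean_space set"
  assumes "subspace L"
  shows "continuous_on UNIV (proj L)"
proof -
  obtain B where "finite B" and proj: "\<And>x. proj L x = (\<Sum>b\<in>B. (x \<bullet> b) *\<^sub>R b)"
    using proj_eq_sum_orthonormal_basis[OF assms] by blast
  have "continuous_on UNIV (\<lambda>x. \<Sum>b\<in>B. (x \<bullet> b) *\<^sub>R b)"
    by (intro continuous_intros)
  then show ?thesis by (simp add: proj fun_eq_iff)
qed

lemma image_segments_meet_iff: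
  "P ` closed_segment a b \<inter> P ` closed_segment c d \<noteq> {} \<longleftrightarrow>
   (\<exists>u v. (u, v) \<in> {0..1::real} \<times> {0..1::real} \<and>
      P ((1 - u) *\<^sub>R a + u *\<^sub>R b) = P ((1 - v) *\<^sub>R c + v *\<^sub>R d))"
  unfolding closed_segment_def by fastforce

text \<open>The segment parameters range over a compact square, so the set of quadruples whose
  projected segments meet is a projection of a closed set along a compact factor.\<close>

lemma closed_proj_segments_meet:
  fixes L :: "'a::euclidean_space set"
  assumes L: "subspace L"
  shows "closed {(a, b, c, d).
            proj L ` closed_segment a b \<inter> proj L ` closed_segment c d \<noteq> {}}"
proof -
  let ?T = "{((u, v), a, b, c, d).
       proj L ((1 - u) *\<^sub>R a + u *\<^sub>R b) = proj L ((1 - v) *\<^sub>R c + v *\<^sub>R d)}"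
  have "closed ?T"
    unfolding case_prod_unfold
    by (intro closed_Collect_eq continuous_on_compose2[OF continuous_on_proj[OF L]]
          continuous_intros) auto
  then have "closed {p. \<exists>uv. uv \<in> {0..1::real} \<times> {0..1::real} \<and> (uv, p) \<in> ?T}"
    by (rule closed_compact_projection[OF compact_Times[OF compact_Icc compact_Icc]])
  moreover have "{p. \<exists>uv. uv \<in> {0..1::real} \<times> {0..1::real} \<and> (uv, p) \<in> ?T} =
      {(a, b, c, d). proj L ` closed_segment a b \<inter> proj L ` closed_segment c d \<noteq> {}}"
    unfolding image_segments_meet_iff by auto
  ultimately show ?thesis by simp
qed

definition crossing_indicator :: "'a::euclidean_space set \<Rightarrow> real \<Rightarrow> 'a \<Rightarrow> 'a \<Rightarrow> 'a \<Rightarrow> 'a \<Rightarrow> real"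
  where "crossing_indicator L \<delta> a b c d =
    of_bool (proj L ` closed_segment a b \<inter> proj L ` closed_segment c d \<noteq> {})
    * of_bool (norm (a - b) \<le> \<delta>) * of_bool (norm (c - d) \<le> \<delta>)"

lemma crossing_indicator_nonneg: "0 \<le> crossing_indicator L \<delta> a b c d"
  by (simp add: crossing_indicator_def)

lemma crossing_indicator_le_1: "crossing_indicator L \<delta> a b c d \<le> 1"
  by (simp add: crossing_indicator_def)

lemma borel_measurable_crossing_indicator:
  fixes L :: "'a::euclidean_space set"
  assumes L: "subspace L"
    and [measurable]: "a \<in> borel_measurable M" "b \<in> borel_measurable M"
      "c \<in> borel_measurable M" "d \<in> borel_measurable M"
  shows "(\<lambda>x. crossing_indicator L \<delta> (a x) (b x) (c x) (d x)) \<in> borel_measurable M"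
proof -
  define S where "S = {(a, b, c, d).
            proj L ` closed_segment a b \<inter> proj L ` closed_segment c d \<noteq> {}}"
  define C where "C = {p :: 'a \<times> 'a. norm (fst p - snd p) \<le> \<delta>}"
  have [measurable]: "S \<in> sets borel"
    unfolding S_def by (rule borel_closed[OF closed_proj_segments_meet[OF L]])
  have [measurable]: "C \<in> sets borel"
    unfolding C_def by (intro borel_closed closed_Collect_le continuous_intros)
  have "crossing_indicator L \<delta> (a x) (b x) (c x) (d x) =
      indicator S (a x, b x, c x, d x) * indicator C (a x, b x) * indicator C (c x, d x)" for x
    unfolding crossing_indicator_def S_def C_def by (simp add: indicator_def)
  then show ?thesis by simp
qed

lemma cr_bar_eq_sum_distinct_index_lists:
  "cr_bar L \<delta> \<omega> = 1/8 * (\<Sum>xs\<in>distinct_index_lists 4 (fst \<omega>).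
      crossing_indicator L \<delta> (snd \<omega> (xs!0)) (snd \<omega> (xs!1)) (snd \<omega> (xs!2)) (snd \<omega> (xs!3)))"
proof -
  obtain N X where \<omega>: "\<omega> = (N, X)" by fastforce
  have "(\<Sum>(i,j,k,l) \<in> {(i,j,k,l). i < N \<and> j < N \<and> k < N \<and> l < N \<and> distinct [i,j,k,l]}.
        crossing_indicator L \<delta> (X i) (X j) (X k) (X l))
     = (\<Sum>xs\<in>distinct_index_lists 4 N.
        crossing_indicator L \<delta> (X (xs!0)) (X (xs!1)) (X (xs!2)) (X (xs!3)))"
  proof (rule sum.reindex_bij_witness[where i="\<lambda>xs. (xs!0, xs!1, xs!2, xs!3)"
        and j="\<lambda>(i,j,k,l). [i,j,k,l]"])
    fix xs assume xs: "xs \<in> distinct_index_lists 4 N"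
    then obtain i j k l where "xs = [i, j, k, l]"
      by (auto simp: distinct_index_lists_def numeral_eq_Suc length_Suc_conv)
    with xs show "(case (xs!0, xs!1, xs!2, xs!3) of (i,j,k,l) \<Rightarrow> [i,j,k,l]) = xs"
      and "(xs!0, xs!1, xs!2, xs!3) \<in>
        {(i,j,k,l). i < N \<and> j < N \<and> k < N \<and> l < N \<and> distinct [i,j,k,l]}"
      by (auto simp: distinct_index_lists_def)
  qed (auto simp: distinct_index_lists_def)
  then show ?thesis by (simp add: \<omega> cr_bar_def crossing_indicator_def)
qed

lemma stress_eq_sum_distinct_index_lists:
  "stress L w \<omega> = 1/2 * (\<Sum>xs\<in>distinct_index_lists 2 (fst \<omega>).
      w (snd \<omega> (xs!0)) (snd \<omega> (xs!1))
      * (norm (snd \<omega> (xs!0) - snd \<omega> (xs!1)) - norm (proj L (snd \<omega> (xs!0)) - proj L (snd \<omega> (xs!1))))\<^sup>2)"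
proof -
  obtain N X where \<omega>: "\<omega> = (N, X)" by fastforce
  have "(\<Sum>(i,j) \<in> {(i,j). i < N \<and> j < N \<and> i \<noteq> j}.
        w (X i) (X j) * (norm (X i - X j) - norm (proj L (X i) - proj L (X j)))\<^sup>2)
     = (\<Sum>xs\<in>distinct_index_lists 2 N. w (X (xs!0)) (X (xs!1))
        * (norm (X (xs!0) - X (xs!1)) - norm (proj L (X (xs!0)) - proj L (X (xs!1))))\<^sup>2)"
  proof (rule sum.reindex_bij_witness[where i="\<lambda>xs. (xs!0, xs!1)" and j="\<lambda>(i,j). [i,j]"])
    fix xs assume xs: "xs \<in> distinct_index_lists 2 N"
    then obtain i j where "xs = [i, j]"
      by (auto simp: distinct_index_lists_def numeral_eq_Suc length_Suc_conv)
    with xs show "(case (xs!0, xs!1) of (i,j) \<Rightarrow> [i,j]) = xs"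
      and "(xs!0, xs!1) \<in> {(i,j). i < N \<and> j < N \<and> i \<noteq> j}"
      by (auto simp: distinct_index_lists_def)
  qed (auto simp: distinct_index_lists_def)
  then show ?thesis by (simp add: \<omega> stress_def)
qed

section \<open>Covariance\<close>

lemma cov_eq_integral_mult_diff:
  assumes "prob_space M" and X: "integrable M X" and Y: "integrable M Y"
    and XY: "integrable M (\<lambda>\<omega>. X \<omega> * Y \<omega>)"
  shows "cov M X Y = (\<integral>\<omega>. X \<omega> * Y \<omega> \<partial>M) - (\<integral>\<omega>. X \<omega> \<partial>M) * (\<integral>\<omega>. Y \<omega> \<partial>M)"
proof -
  interpret prob_space M by fact
  define a where "a = (\<integral>\<omega>. X \<omega> \<partial>M)"
  define b where "b = (\<integral>\<omega>. Y \<omega> \<partial>M)"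
  have "cov M X Y = (\<integral>\<omega>. X \<omega> * Y \<omega> - b * X \<omega> - a * Y \<omega> + a * b \<partial>M)"
    unfolding cov_def a_def[symmetric] b_def[symmetric] by (simp add: algebra_simps)
  also have "\<dots> = (\<integral>\<omega>. X \<omega> * Y \<omega> \<partial>M) - b * a - a * b + a * b"
    using X Y XY by (simp add: prob_space a_def b_def)
  finally show ?thesis by (simp add: a_def b_def)
qed

lemma cov_cong_AE:
  assumes "AE \<omega> in M. Y \<omega> = Y' \<omega>"
    and [measurable]: "X \<in> borel_measurable M" "Y \<in> borel_measurable M" "Y' \<in> borel_measurable M"
  shows "cov M X Y = cov M X Y'"
proof -
  have "(\<integral>\<omega>. Y \<omega> \<partial>M) = (\<integral>\<omega>. Y' \<omega> \<partial>M)" by (rule integral_cong_AE) (use assms in auto)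
  then show ?thesis
    unfolding cov_def by (intro integral_cong_AE) (use assms(1) in \<open>auto elim!: AE_mp\<close>)
qed

lemma integrable_mult_of_square_integrable:
  fixes f g :: "'a \<Rightarrow> real"
  assumes [measurable]: "f \<in> borel_measurable M" "g \<in> borel_measurable M"
    and "integrable M (\<lambda>x. (f x)\<^sup>2)" "integrable M (\<lambda>x. (g x)\<^sup>2)"
  shows "integrable M (\<lambda>x. f x * g x)"
proof (rule Bochner_Integration.integrable_bound[of _ "\<lambda>x. (f x)\<^sup>2 + (g x)\<^sup>2"])
  show "AE x in M. norm (f x * g x) \<le> norm ((f x)\<^sup>2 + (g x)\<^sup>2)"
  proof (intro AE_I2)
    fix x
    have "2 * (\<bar>f x\<bar> * \<bar>g x\<bar>) \<le> (f x)\<^sup>2 + (g x)\<^sup>2"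
      using sum_squares_bound[of "\<bar>f x\<bar>" "\<bar>g x\<bar>"] by simp
    moreover have "0 \<le> \<bar>f x\<bar> * \<bar>g x\<bar>" by simp
    ultimately have "\<bar>f x * g x\<bar> \<le> (f x)\<^sup>2 + (g x)\<^sup>2" unfolding abs_mult by linarith
    then show "norm (f x * g x) \<le> norm ((f x)\<^sup>2 + (g x)\<^sup>2)" by simp
  qed
qed (use assms in auto)

section \<open>The Poisson process on a window\<close>

lemma measurable_pair_measure_pmf:
  fixes h :: "nat \<times> 'b \<Rightarrow> 'c"
  assumes "\<And>n. (\<lambda>X. h (n, X)) \<in> measurable N K"
  shows "h \<in> measurable (measure_pmf p \<Otimes>\<^sub>M N) K"
proof -
  have "sets (measure_pmf p \<Otimes>\<^sub>M N) = sets (count_space UNIV \<Otimes>\<^sub>M N)"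
    by (rule sets_pair_measure_cong) simp_all
  moreover have "h \<in> measurable (count_space UNIV \<Otimes>\<^sub>M N) K"
    by (rule measurable_pair_measure_countable1) (use assms in auto)
  ultimately show ?thesis by (simp cong: measurable_cong_sets)
qed

locale poisson_window =
  fixes W :: "'a::euclidean_space set" and t :: real
  assumes sets_W: "W \<in> sets borel" and emeasure_W: "emeasure lborel W = 1" and t_pos: "0 < t"
begin

abbreviation U :: "'a measure" where "U \<equiv> uniform_measure lborel W"

declare sets_W [measurable]

lemma prob_space_U: "prob_space U"
  by (rule prob_space_uniform_measure) (simp_all add: emeasure_W)

lemma prob_space_PiM_U: "prob_space (PiM I (\<lambda>_. U))"
  by (intro prob_space_PiM prob_space_U)

lemma product_sigma_finite_U: "product_sigma_finite (\<lambda>_::nat. U)"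
  using prob_space_U by (simp add: product_sigma_finite_def prob_space_imp_sigma_finite)

lemma prob_space_ppp: "prob_space (ppp t W)"
  unfolding ppp_def by (intro prob_space_pair prob_space_measure_pmf prob_space_PiM_U)

sublocale ppp: prob_space "ppp t W"
  by (rule prob_space_ppp)

lemmas borel_measurable_nn_integral_U [measurable (raw)] =
  sigma_finite_measure.borel_measurable_nn_integral[OF prob_space_imp_sigma_finite[OF prob_space_U]]

lemma AE_ppp_in_W: "AE \<omega> in ppp t W. \<forall>i. snd \<omega> i \<in> W"
proof -
  let ?M = "PiM UNIV (\<lambda>_::nat. U)"
  interpret pair_sigma_finite "measure_pmf (poisson_pmf t)" ?M
    unfolding pair_sigma_finite_def
    using prob_space_imp_sigma_finite[OF prob_space_measure_pmf]
      prob_space_imp_sigma_finite[OF prob_space_PiM_U] by auto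
  have "AE X in ?M. \<forall>i. X i \<in> W"
  proof (subst AE_all_countable, intro allI)
    fix i :: nat
    show "AE X in ?M. X i \<in> W"
      by (rule AE_PiM_component[OF prob_space_U]) (auto intro!: AE_uniform_measureI)
  qed
  moreover have "{\<omega> \<in> space (measure_pmf (poisson_pmf t) \<Otimes>\<^sub>M ?M). \<forall>i. snd \<omega> i \<in> W}
     \<in> sets (measure_pmf (poisson_pmf t) \<Otimes>\<^sub>M ?M)"
    by measurable
  ultimately show ?thesis
    unfolding ppp_def by (intro AE_pair_measure) simp_all
qed

theorem nn_integral_ppp_sum_distinct_index_lists:
  fixes \<psi> :: "(nat \<Rightarrow> 'a) \<Rightarrow> ennreal"
  assumes \<psi>[measurable]: "\<psi> \<in> borel_measurable (PiM {..<m} (\<lambda>_. U))"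
  shows "(\<integral>\<^sup>+\<omega>. (\<Sum>xs\<in>distinct_index_lists m (fst \<omega>). \<psi> (\<lambda>i\<in>{..<m}. snd \<omega> (xs!i))) \<partial>ppp t W)
       = ennreal (t ^ m) * (\<integral>\<^sup>+y. \<psi> y \<partial>PiM {..<m} (\<lambda>_. U))"
proof -
  let ?M = "PiM UNIV (\<lambda>_::nat. U)"
  let ?I = "\<integral>\<^sup>+y. \<psi> y \<partial>PiM {..<m} (\<lambda>_. U)"
  interpret M: prob_space ?M by (rule prob_space_PiM_U)
  have select[measurable]: "(\<lambda>X. \<lambda>i\<in>{..<m}. X (xs!i)) \<in> measurable ?M (PiM {..<m} (\<lambda>_. U))"
    for xs by measurable
  have reindex: "(\<integral>\<^sup>+X. \<psi> (\<lambda>i\<in>{..<m}. X (xs!i)) \<partial>?M) = ?I"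
    if "xs \<in> distinct_index_lists m n" for xs n
  proof -
    have "inj_on (nth xs) {..<m}"
      using that by (intro inj_on_nth) (auto simp: distinct_index_lists_def)
    then have "distr ?M (PiM {..<m} (\<lambda>_. U)) (\<lambda>X. \<lambda>i\<in>{..<m}. X (xs!i)) = PiM {..<m} (\<lambda>_. U)"
      using distr_PiM_reindex[of UNIV "\<lambda>_. U" "nth xs" "{..<m}"] prob_space_U by simp
    then show ?thesis using nn_integral_distr[OF select[of xs], of \<psi>] by simp
  qed
  have meas: "(\<lambda>\<omega>. \<Sum>xs\<in>distinct_index_lists m (fst \<omega>). \<psi> (\<lambda>i\<in>{..<m}. snd \<omega> (xs!i)))
      \<in> borel_measurable (measure_pmf (poisson_pmf t) \<Otimes>\<^sub>M ?M)"
    by (rule measurable_pair_measure_pmf) simp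
  have "(\<integral>\<^sup>+\<omega>. (\<Sum>xs\<in>distinct_index_lists m (fst \<omega>). \<psi> (\<lambda>i\<in>{..<m}. snd \<omega> (xs!i))) \<partial>ppp t W)
      = (\<integral>\<^sup>+n. \<integral>\<^sup>+X. (\<Sum>xs\<in>distinct_index_lists m n. \<psi> (\<lambda>i\<in>{..<m}. X (xs!i))) \<partial>?M \<partial>poisson_pmf t)"
    unfolding ppp_def using M.nn_integral_fst[OF meas] by simp
  also have "\<dots> = (\<integral>\<^sup>+n. ennreal (real (card (distinct_index_lists m n))) * ?I \<partial>poisson_pmf t)"
    by (intro nn_integral_cong) (simp add: nn_integral_sum reindex ennreal_of_nat_eq_real_of_nat)
  also have "\<dots> = ennreal (t ^ m) * ?I"
    by (simp add: nn_integral_multc nn_integral_poisson_card_distinct_index_lists[OF t_pos])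
  finally show ?thesis .
qed

lemma borel_measurable_ppp_sum_distinct_index_lists [measurable]:
  fixes \<psi> :: "(nat \<Rightarrow> 'a) \<Rightarrow> 'b::{second_countable_topology, topological_comm_monoid_add}"
  assumes [measurable]: "\<psi> \<in> borel_measurable (PiM {..<m} (\<lambda>_. U))"
  shows "(\<lambda>\<omega>. \<Sum>xs\<in>distinct_index_lists m (fst \<omega>). \<psi> (\<lambda>i\<in>{..<m}. snd \<omega> (xs!i)))
    \<in> borel_measurable (ppp t W)"
proof -
  have [measurable]: "(\<lambda>X. \<psi> (\<lambda>i\<in>{..<m}. X (xs!i))) \<in> borel_measurable (PiM UNIV (\<lambda>_. U))"
    for xs by measurable
  show ?thesis
    unfolding ppp_def by (rule measurable_pair_measure_pmf, simp) measurable
qed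

corollary nn_integral_ppp_scaled_sum_distinct_index_lists:
  fixes \<psi> :: "(nat \<Rightarrow> 'a) \<Rightarrow> real"
  assumes [measurable]: "\<psi> \<in> borel_measurable (PiM {..<m} (\<lambda>_. U))"
    and \<psi>_nonneg: "\<And>y. 0 \<le> \<psi> y" and c: "0 \<le> c"
  shows "(\<integral>\<^sup>+\<omega>. ennreal (c * (\<Sum>xs\<in>distinct_index_lists m (fst \<omega>). \<psi> (\<lambda>i\<in>{..<m}. snd \<omega> (xs!i))))
      \<partial>ppp t W)
    = ennreal (c * t ^ m) * (\<integral>\<^sup>+y. ennreal (\<psi> y) \<partial>PiM {..<m} (\<lambda>_. U))"
proof -
  have "(\<lambda>\<omega>. \<Sum>xs\<in>distinct_index_lists m (fst \<omega>). ennreal (\<psi> (\<lambda>i\<in>{..<m}. snd \<omega> (xs!i))))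
      \<in> borel_measurable (ppp t W)"
    by measurable
  moreover have "ennreal (c * (\<Sum>xs\<in>distinct_index_lists m (fst \<omega>). \<psi> (\<lambda>i\<in>{..<m}. snd \<omega> (xs!i))))
      = ennreal c * (\<Sum>xs\<in>distinct_index_lists m (fst \<omega>). ennreal (\<psi> (\<lambda>i\<in>{..<m}. snd \<omega> (xs!i))))"
    for \<omega> using c \<psi>_nonneg by (simp add: ennreal_mult sum_nonneg sum_ennreal)
  moreover have "(\<integral>\<^sup>+\<omega>. (\<Sum>xs\<in>distinct_index_lists m (fst \<omega>). ennreal (\<psi> (\<lambda>i\<in>{..<m}. snd \<omega> (xs!i))))
      \<partial>ppp t W) = ennreal (t ^ m) * (\<integral>\<^sup>+y. ennreal (\<psi> y) \<partial>PiM {..<m} (\<lambda>_. U))"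
    by (rule nn_integral_ppp_sum_distinct_index_lists) measurable
  ultimately show ?thesis
    using c t_pos by (simp add: nn_integral_cmult ennreal_mult mult.assoc)
qed

lemma nn_integral_PiM_lessThan_Suc:
  assumes "\<psi> \<in> borel_measurable (PiM {..<Suc n} (\<lambda>_. U))"
  shows "(\<integral>\<^sup>+y. \<psi> y \<partial>PiM {..<Suc n} (\<lambda>_. U)) = (\<integral>\<^sup>+x. \<integral>\<^sup>+a. \<psi> (x(n:=a)) \<partial>U \<partial>PiM {..<n} (\<lambda>_. U))"
proof -
  interpret product_sigma_finite "\<lambda>_::nat. U" by (rule product_sigma_finite_U)
  show ?thesis using product_nn_integral_insert[of "{..<n}" n \<psi>] assms by (simp add: lessThan_Suc)
qed

lemma nn_integral_U_le_1:
  assumes "\<And>x. f x \<le> 1"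
  shows "(\<integral>\<^sup>+x. f x \<partial>U) \<le> 1"
proof -
  interpret prob_space U by (rule prob_space_U)
  have "(\<integral>\<^sup>+x. f x \<partial>U) \<le> (\<integral>\<^sup>+x. 1 \<partial>U)"
    by (rule nn_integral_mono) (use assms in auto)
  also have "\<dots> = 1"
    using emeasure_space_1 by (simp only: nn_integral_const mult_1)
  finally show ?thesis .
qed

lemma set_integral_eq_nn_integral_U:
  fixes \<phi> :: "'a \<Rightarrow> real"
  assumes [measurable]: "\<phi> \<in> borel_measurable borel" and nonneg: "\<And>x. 0 \<le> \<phi> x"
  shows "(LINT x:W|lborel. \<phi> x) = enn2real (\<integral>\<^sup>+x. ennreal (\<phi> x) \<partial>U)"
proof -
  have "(LINT x:W|lborel. \<phi> x) = (\<integral>x. indicator W x * \<phi> x \<partial>lborel)"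
    by (simp add: set_lebesgue_integral_def)
  also have "\<dots> = enn2real (\<integral>\<^sup>+x. ennreal (indicator W x * \<phi> x) \<partial>lborel)"
    by (rule integral_eq_nn_integral) (use nonneg in \<open>auto simp: indicator_def\<close>)
  also have "(\<integral>\<^sup>+x. ennreal (indicator W x * \<phi> x) \<partial>lborel) = (\<integral>\<^sup>+x. ennreal (\<phi> x) * indicator W x \<partial>lborel)"
    by (intro nn_integral_cong) (auto simp: indicator_def)
  also have "\<dots> = (\<integral>\<^sup>+x. ennreal (\<phi> x) \<partial>U)"
    by (simp add: nn_integral_uniform_measure emeasure_W divide_ennreal_def)
  finally show ?thesis .
qed

lemma integrable_ppp_exp_count: "integrable (ppp t W) (\<lambda>\<omega>. exp (real (fst \<omega>)))"
proof (rule integrableI_bounded)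
  interpret M: prob_space "PiM UNIV (\<lambda>_::nat. U)" by (rule prob_space_PiM_U)
  have meas: "(\<lambda>\<omega>. f (fst \<omega>)) \<in> borel_measurable (measure_pmf (poisson_pmf t) \<Otimes>\<^sub>M PiM UNIV (\<lambda>_. U))"
    for f :: "nat \<Rightarrow> 'b::{second_countable_topology, linorder_topology}"
    by (rule measurable_pair_measure_pmf) simp
  then show "(\<lambda>\<omega>. exp (real (fst \<omega>))) \<in> borel_measurable (ppp t W)" by (simp add: ppp_def)
  have "(\<integral>\<^sup>+\<omega>. ennreal (norm (exp (real (fst \<omega>)))) \<partial>ppp t W)
      = (\<integral>\<^sup>+n. \<integral>\<^sup>+X. ennreal (exp (real n)) \<partial>PiM UNIV (\<lambda>_::nat. U) \<partial>poisson_pmf t)"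
    unfolding ppp_def using M.nn_integral_fst[OF meas, of "\<lambda>n. ennreal (exp (real n))"] by simp
  also have "\<dots> = (\<integral>\<^sup>+n. ennreal (exp (real n)) \<partial>poisson_pmf t)"
    by (simp add: M.emeasure_space_1)
  finally show "(\<integral>\<^sup>+\<omega>. ennreal (norm (exp (real (fst \<omega>)))) \<partial>ppp t W) < \<infinity>"
    by (simp add: nn_integral_poisson_exp[OF t_pos])
qed

end

section \<open>Crossings and stress of the process\<close>

text \<open>The stress summand is cut off outside \<open>W \<times> W\<close>, where the weight \<open>w\<close> is neither
  assumed positive nor measurable; almost surely all points lie in \<open>W\<close>.\<close>

definition stress_term :: "'a::euclidean_space set \<Rightarrow> 'a set \<Rightarrow> ('a \<Rightarrow> 'a \<Rightarrow> real) \<Rightarrow> 'a \<Rightarrow> 'a \<Rightarrow> real"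
  where "stress_term W L w a b =
    w a b * (norm (a - b) - norm (proj L a - proj L b))\<^sup>2 * indicator (W \<times> W) (a, b)"

definition stress_on :: "'a::euclidean_space set \<Rightarrow> 'a set \<Rightarrow> ('a \<Rightarrow> 'a \<Rightarrow> real) \<Rightarrow> nat \<times> (nat \<Rightarrow> 'a) \<Rightarrow> real"
  where "stress_on W L w \<omega> = 1/2 * (\<Sum>xs\<in>distinct_index_lists 2 (fst \<omega>).
    stress_term W L w (snd \<omega> (xs!0)) (snd \<omega> (xs!1)))"

definition crossing_integral :: "'a::euclidean_space set \<Rightarrow> 'a set \<Rightarrow> real \<Rightarrow> 'a \<Rightarrow> ennreal"
  where "crossing_integral W L \<delta> v = (\<integral>\<^sup>+b. \<integral>\<^sup>+c. \<integral>\<^sup>+d. ennreal (crossing_indicator L \<delta> v b c d)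
    \<partial>uniform_measure lborel W \<partial>uniform_measure lborel W \<partial>uniform_measure lborel W)"

definition stress_integral :: "'a::euclidean_space set \<Rightarrow> 'a set \<Rightarrow> ('a \<Rightarrow> 'a \<Rightarrow> real) \<Rightarrow> 'a \<Rightarrow> ennreal"
  where "stress_integral W L w v = (\<integral>\<^sup>+b. ennreal (stress_term W L w v b) \<partial>uniform_measure lborel W)"

locale stress_window = poisson_window W t for W :: "'a::euclidean_space set" and t +
  fixes L :: "'a set" and w :: "'a \<Rightarrow> 'a \<Rightarrow> real"
  assumes subspace_L: "subspace L"
    and w_pos: "\<forall>x\<in>W. \<forall>y\<in>W. w x y > 0"
    and w_measurable: "(\<lambda>p. w (fst p) (snd p)) \<in> borel_measurable (restrict_space borel (W \<times> W))"
begin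

lemmas borel_measurable_crossing_indicator_L [measurable (raw)] =
  borel_measurable_crossing_indicator[OF subspace_L]

lemma stress_term_nonneg: "0 \<le> stress_term W L w a b"
  using w_pos by (auto simp: stress_term_def indicator_def less_imp_le)

lemma borel_measurable_stress_term_pair:
  "(\<lambda>p. stress_term W L w (fst p) (snd p)) \<in> borel_measurable borel"
proof -
  have "continuous_on UNIV (\<lambda>p::'a \<times> 'a.
      (norm (fst p - snd p) - norm (proj L (fst p) - proj L (snd p)))\<^sup>2)"
    by (intro continuous_intros continuous_on_compose2[OF continuous_on_proj[OF subspace_L]]) auto
  then have "(\<lambda>p::'a \<times> 'a. (norm (fst p - snd p) - norm (proj L (fst p) - proj L (snd p)))\<^sup>2)
      \<in> borel_measurable borel"
    by (rule borel_measurable_continuous_onI)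
  then have "(\<lambda>p::'a \<times> 'a. w (fst p) (snd p) * (norm (fst p - snd p) - norm (proj L (fst p) - proj L (snd p)))\<^sup>2)
      \<in> borel_measurable (restrict_space borel (W \<times> W))"
    by (rule borel_measurable_times[OF w_measurable measurable_restrict_space1])
  then have "(\<lambda>p::'a \<times> 'a. indicator (W \<times> W) p *\<^sub>R
        (w (fst p) (snd p) * (norm (fst p - snd p) - norm (proj L (fst p) - proj L (snd p)))\<^sup>2))
      \<in> borel_measurable borel"
    using pair_measureI[OF sets_W sets_W, unfolded borel_prod]
    by (subst (asm) borel_measurable_restrict_space_iff) auto
  then show ?thesis by (simp add: stress_term_def mult.commute)
qed

lemma borel_measurable_stress_term [measurable (raw)]:
  assumes "f \<in> borel_measurable M" "g \<in> borel_measurable M"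
  shows "(\<lambda>x. stress_term W L w (f x) (g x)) \<in> borel_measurable M"
  using measurable_compose[OF borel_measurable_Pair[OF assms] borel_measurable_stress_term_pair]
  by (simp add: o_def)

lemma borel_measurable_crossing_integral [measurable (raw)]:
  assumes [measurable]: "f \<in> borel_measurable M"
  shows "(\<lambda>x. crossing_integral W L \<delta> (f x)) \<in> borel_measurable M"
  unfolding crossing_integral_def by measurable

lemma borel_measurable_stress_integral [measurable (raw)]:
  assumes [measurable]: "f \<in> borel_measurable M"
  shows "(\<lambda>x. stress_integral W L w (f x)) \<in> borel_measurable M"
  unfolding stress_integral_def by measurable

lemma cr_bar_nonneg: "0 \<le> cr_bar L \<delta> \<omega>"
  unfolding cr_bar_eq_sum_distinct_index_lists by (auto intro!: sum_nonneg crossing_indicator_nonneg)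

lemma stress_on_nonneg: "0 \<le> stress_on W L w \<omega>"
  unfolding stress_on_def by (auto intro!: sum_nonneg stress_term_nonneg)

lemma borel_measurable_cr_bar [measurable]: "cr_bar L \<delta> \<in> borel_measurable (ppp t W)"
  unfolding ppp_def cr_bar_eq_sum_distinct_index_lists by (rule measurable_pair_measure_pmf) simp

lemma borel_measurable_stress_on [measurable]: "stress_on W L w \<in> borel_measurable (ppp t W)"
  unfolding ppp_def stress_on_def by (rule measurable_pair_measure_pmf) simp

lemma AE_stress_eq_stress_on: "AE \<omega> in ppp t W. stress L w \<omega> = stress_on W L w \<omega>"
  using AE_ppp_in_W
proof (rule AE_mp, intro AE_I2 impI)
  fix \<omega> :: "nat \<times> (nat \<Rightarrow> 'a)"
  assume "\<forall>i. snd \<omega> i \<in> W"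
  then show "stress L w \<omega> = stress_on W L w \<omega>"
    by (simp add: stress_eq_sum_distinct_index_lists stress_on_def stress_term_def)
qed

lemma cr_bar_le: "cr_bar L \<delta> \<omega> \<le> real (fst \<omega>) ^ 4 / 8"
proof -
  have "cr_bar L \<delta> \<omega> \<le> 1/8 * (\<Sum>xs\<in>distinct_index_lists 4 (fst \<omega>). 1)"
    unfolding cr_bar_eq_sum_distinct_index_lists by (intro mult_left_mono sum_mono crossing_indicator_le_1) simp
  also have "\<dots> \<le> real (fst \<omega>) ^ 4 / 8"
    using card_distinct_index_lists_le[of 4 "fst \<omega>"] by (simp flip: of_nat_power)
  finally show ?thesis .
qed

lemma integrable_cr_bar_square: "integrable (ppp t W) (\<lambda>\<omega>. (cr_bar L \<delta> \<omega>)\<^sup>2)"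
proof (rule Bochner_Integration.integrable_bound)
  show "integrable (ppp t W) (\<lambda>\<omega>. fact 8 / 64 * exp (real (fst \<omega>)))"
    using integrable_ppp_exp_count by simp
  show "AE \<omega> in ppp t W. norm ((cr_bar L \<delta> \<omega>)\<^sup>2) \<le> norm (fact 8 / 64 * exp (real (fst \<omega>)))"
  proof (rule AE_I2)
    fix \<omega>
    have "(cr_bar L \<delta> \<omega>)\<^sup>2 \<le> (real (fst \<omega>) ^ 4 / 8)\<^sup>2"
      by (rule power_mono[OF cr_bar_le cr_bar_nonneg])
    also have "\<dots> = real (fst \<omega>) ^ 8 / 64" by (simp add: power_divide flip: power_mult)
    also have "\<dots> \<le> fact 8 * exp (real (fst \<omega>)) / 64"
      by (intro divide_right_mono power_le_fact_mult_exp) simp_all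
    finally show "norm ((cr_bar L \<delta> \<omega>)\<^sup>2) \<le> norm (fact 8 / 64 * exp (real (fst \<omega>)))" by simp
  qed
qed simp

lemma nn_integral_PiM_stress_term:
  "(\<integral>\<^sup>+y. ennreal (stress_term W L w (y 0) (y 1)) \<partial>PiM {..<2::nat} (\<lambda>_. U))
    = (\<integral>\<^sup>+v. stress_integral W L w v \<partial>U)"
proof -
  have m2: "(\<lambda>y. ennreal (stress_term W L w (y 0) (y 1))) \<in> borel_measurable (PiM {..<Suc 1} (\<lambda>_. U))"
    and m1: "(\<lambda>y. stress_integral W L w (y 0)) \<in> borel_measurable (PiM {..<Suc 0} (\<lambda>_. U))"
    by measurable
  have "(\<integral>\<^sup>+y. ennreal (stress_term W L w (y 0) (y 1)) \<partial>PiM {..<2::nat} (\<lambda>_. U))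
      = (\<integral>\<^sup>+x. stress_integral W L w (x 0) \<partial>PiM {..<1::nat} (\<lambda>_. U))"
    using nn_integral_PiM_lessThan_Suc[OF m2] by (simp add: stress_integral_def numeral_2_eq_2)
  also have "\<dots> = (\<integral>\<^sup>+v. stress_integral W L w v \<partial>U)"
    using nn_integral_PiM_lessThan_Suc[OF m1] by (simp add: prob_space.emeasure_space_1[OF prob_space_PiM_U])
  finally show ?thesis .
qed

lemma nn_integral_PiM_crossing_mult:
  assumes [measurable]: "h \<in> borel_measurable borel"
  shows "(\<integral>\<^sup>+y. ennreal (crossing_indicator L \<delta> (y 0) (y 1) (y 2) (y 3)) * h (y 0) \<partial>PiM {..<4::nat} (\<lambda>_. U))
    = (\<integral>\<^sup>+v. crossing_integral W L \<delta> v * h v \<partial>U)"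
proof -
  let ?c = "crossing_indicator L \<delta>"
  have m4: "(\<lambda>y. ennreal (?c (y 0) (y 1) (y 2) (y 3)) * h (y 0)) \<in> borel_measurable (PiM {..<Suc 3} (\<lambda>_. U))"
    and m3: "(\<lambda>y. (\<integral>\<^sup>+d. ennreal (?c (y 0) (y 1) (y 2) d) \<partial>U) * h (y 0))
      \<in> borel_measurable (PiM {..<Suc 2} (\<lambda>_. U))"
    and m2: "(\<lambda>y. (\<integral>\<^sup>+c. \<integral>\<^sup>+d. ennreal (?c (y 0) (y 1) c d) \<partial>U \<partial>U) * h (y 0))
      \<in> borel_measurable (PiM {..<Suc 1} (\<lambda>_. U))"
    and m1: "(\<lambda>y. crossing_integral W L \<delta> (y 0) * h (y 0)) \<in> borel_measurable (PiM {..<Suc 0} (\<lambda>_. U))"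
    by measurable
  have "(\<integral>\<^sup>+y. ennreal (?c (y 0) (y 1) (y 2) (y 3)) * h (y 0) \<partial>PiM {..<4::nat} (\<lambda>_. U))
      = (\<integral>\<^sup>+x. (\<integral>\<^sup>+d. ennreal (?c (x 0) (x 1) (x 2) d) \<partial>U) * h (x 0) \<partial>PiM {..<3::nat} (\<lambda>_. U))"
    using nn_integral_PiM_lessThan_Suc[OF m4] by (simp add: nn_integral_multc)
  also have "\<dots> = (\<integral>\<^sup>+x. (\<integral>\<^sup>+c. \<integral>\<^sup>+d. ennreal (?c (x 0) (x 1) c d) \<partial>U \<partial>U) * h (x 0) \<partial>PiM {..<2::nat} (\<lambda>_. U))"
    using nn_integral_PiM_lessThan_Suc[OF m3] by (simp add: nn_integral_multc)
  also have "\<dots> = (\<integral>\<^sup>+x. crossing_integral W L \<delta> (x 0) * h (x 0) \<partial>PiM {..<1::nat} (\<lambda>_. U))"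
    using nn_integral_PiM_lessThan_Suc[OF m2]
    by (simp add: nn_integral_multc crossing_integral_def numeral_2_eq_2)
  also have "\<dots> = (\<integral>\<^sup>+v. crossing_integral W L \<delta> v * h v \<partial>U)"
    using nn_integral_PiM_lessThan_Suc[OF m1] by (simp add: prob_space.emeasure_space_1[OF prob_space_PiM_U])
  finally show ?thesis .
qed

lemma nn_integral_PiM_crossing:
  "(\<integral>\<^sup>+y. ennreal (crossing_indicator L \<delta> (y 0) (y 1) (y 2) (y 3)) \<partial>PiM {..<4::nat} (\<lambda>_. U))
    = (\<integral>\<^sup>+v. crossing_integral W L \<delta> v \<partial>U)"
  using nn_integral_PiM_crossing_mult[of "\<lambda>_. 1"] by simp

lemma nn_integral_PiM_crossing_disjoint_stress:
  "(\<integral>\<^sup>+y. ennreal (crossing_indicator L \<delta> (y 0) (y 1) (y 2) (y 3) * stress_term W L w (y 4) (y 5))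
      \<partial>PiM {..<6::nat} (\<lambda>_. U))
    = (\<integral>\<^sup>+v. crossing_integral W L \<delta> v \<partial>U) * (\<integral>\<^sup>+v. stress_integral W L w v \<partial>U)"
proof -
  let ?c = "crossing_indicator L \<delta>" and ?S = "\<integral>\<^sup>+v. stress_integral W L w v \<partial>U"
  have m6: "(\<lambda>y. ennreal (?c (y 0) (y 1) (y 2) (y 3) * stress_term W L w (y 4) (y 5)))
      \<in> borel_measurable (PiM {..<Suc 5} (\<lambda>_. U))"
    and m5: "(\<lambda>y. ennreal (?c (y 0) (y 1) (y 2) (y 3)) * stress_integral W L w (y 4))
      \<in> borel_measurable (PiM {..<Suc 4} (\<lambda>_. U))"
    by measurable
  have "(\<integral>\<^sup>+y. ennreal (?c (y 0) (y 1) (y 2) (y 3) * stress_term W L w (y 4) (y 5)) \<partial>PiM {..<6::nat} (\<lambda>_. U))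
      = (\<integral>\<^sup>+x. ennreal (?c (x 0) (x 1) (x 2) (x 3)) * stress_integral W L w (x 4) \<partial>PiM {..<5::nat} (\<lambda>_. U))"
    using nn_integral_PiM_lessThan_Suc[OF m6]
    by (simp add: stress_integral_def ennreal_mult crossing_indicator_nonneg stress_term_nonneg
        nn_integral_cmult)
  also have "\<dots> = (\<integral>\<^sup>+x. ennreal (?c (x 0) (x 1) (x 2) (x 3)) * ?S \<partial>PiM {..<4::nat} (\<lambda>_. U))"
    using nn_integral_PiM_lessThan_Suc[OF m5] by (simp add: nn_integral_cmult)
  also have "\<dots> = (\<integral>\<^sup>+v. crossing_integral W L \<delta> v \<partial>U) * ?S"
    using nn_integral_PiM_crossing_mult[of "\<lambda>_. ?S"] by (simp add: nn_integral_multc)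
  finally show ?thesis .
qed

lemma nn_integral_PiM_crossing_sharing_stress:
  "(\<integral>\<^sup>+y. ennreal (crossing_indicator L \<delta> (y 0) (y 1) (y 2) (y 3) * stress_term W L w (y 0) (y 4))
      \<partial>PiM {..<5::nat} (\<lambda>_. U))
    = (\<integral>\<^sup>+v. crossing_integral W L \<delta> v * stress_integral W L w v \<partial>U)"
proof -
  let ?c = "crossing_indicator L \<delta>"
  have m5: "(\<lambda>y. ennreal (?c (y 0) (y 1) (y 2) (y 3) * stress_term W L w (y 0) (y 4)))
      \<in> borel_measurable (PiM {..<Suc 4} (\<lambda>_. U))"
    by measurable
  have "(\<integral>\<^sup>+y. ennreal (?c (y 0) (y 1) (y 2) (y 3) * stress_term W L w (y 0) (y 4)) \<partial>PiM {..<5::nat} (\<lambda>_. U))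
      = (\<integral>\<^sup>+x. ennreal (?c (x 0) (x 1) (x 2) (x 3)) * stress_integral W L w (x 0) \<partial>PiM {..<4::nat} (\<lambda>_. U))"
    using nn_integral_PiM_lessThan_Suc[OF m5]
    by (simp add: stress_integral_def ennreal_mult crossing_indicator_nonneg stress_term_nonneg
        nn_integral_cmult)
  also have "\<dots> = (\<integral>\<^sup>+v. crossing_integral W L \<delta> v * stress_integral W L w v \<partial>U)"
    by (rule nn_integral_PiM_crossing_mult) measurable
  finally show ?thesis .
qed

lemma nn_integral_cr_bar:
  "(\<integral>\<^sup>+\<omega>. ennreal (cr_bar L \<delta> \<omega>) \<partial>ppp t W)
    = ennreal (t ^ 4 / 8) * (\<integral>\<^sup>+v. crossing_integral W L \<delta> v \<partial>U)"
proof -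
  let ?\<psi> = "\<lambda>y. crossing_indicator L \<delta> (y 0) (y 1) (y 2) (y 3)"
  have eq: "cr_bar L \<delta> \<omega> = 1/8 * (\<Sum>xs\<in>distinct_index_lists 4 (fst \<omega>). ?\<psi> (\<lambda>i\<in>{..<4}. snd \<omega> (xs!i)))"
    for \<omega> by (simp add: cr_bar_eq_sum_distinct_index_lists)
  have "(\<integral>\<^sup>+\<omega>. ennreal (cr_bar L \<delta> \<omega>) \<partial>ppp t W)
      = ennreal (1/8 * t ^ 4) * (\<integral>\<^sup>+y. ennreal (?\<psi> y) \<partial>PiM {..<4::nat} (\<lambda>_. U))"
    unfolding eq
    by (rule nn_integral_ppp_scaled_sum_distinct_index_lists[where \<psi>="?\<psi>"])
      (simp_all add: crossing_indicator_nonneg)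
  then show ?thesis unfolding nn_integral_PiM_crossing by simp
qed

lemma nn_integral_stress_on:
  "(\<integral>\<^sup>+\<omega>. ennreal (stress_on W L w \<omega>) \<partial>ppp t W)
    = ennreal (t ^ 2 / 2) * (\<integral>\<^sup>+v. stress_integral W L w v \<partial>U)"
proof -
  let ?\<psi> = "\<lambda>y. stress_term W L w (y 0) (y 1)"
  have eq: "stress_on W L w \<omega> = 1/2 * (\<Sum>xs\<in>distinct_index_lists 2 (fst \<omega>). ?\<psi> (\<lambda>i\<in>{..<2}. snd \<omega> (xs!i)))"
    for \<omega> by (simp add: stress_on_def)
  have "(\<integral>\<^sup>+\<omega>. ennreal (stress_on W L w \<omega>) \<partial>ppp t W)
      = ennreal (1/2 * t ^ 2) * (\<integral>\<^sup>+y. ennreal (?\<psi> y) \<partial>PiM {..<2::nat} (\<lambda>_. U))"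
    unfolding eq
    by (rule nn_integral_ppp_scaled_sum_distinct_index_lists[where \<psi>="?\<psi>"])
      (simp_all add: stress_term_nonneg)
  then show ?thesis unfolding nn_integral_PiM_stress_term by simp
qed

lemma cr_bar_mult_stress_on_ge:
  "1/16 * (\<Sum>zs\<in>distinct_index_lists 6 N. crossing_indicator L \<delta> (X (zs!0)) (X (zs!1)) (X (zs!2)) (X (zs!3))
        * stress_term W L w (X (zs!4)) (X (zs!5)))
   + 1/16 * (\<Sum>zs\<in>distinct_index_lists 5 N. crossing_indicator L \<delta> (X (zs!0)) (X (zs!1)) (X (zs!2)) (X (zs!3))
        * stress_term W L w (X (zs!0)) (X (zs!4)))
   \<le> cr_bar L \<delta> (N, X) * stress_on W L w (N, X)"
proof -
  define a where "a xs = crossing_indicator L \<delta> (X (xs!0)) (X (xs!1)) (X (xs!2)) (X (xs!3))" for xs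
  define b where "b ys = stress_term W L w (X (ys!0)) (X (ys!1))" for ys
  have "(\<Sum>zs\<in>distinct_index_lists 6 N. a (take 4 zs) * b (drop 4 zs))
      = (\<Sum>zs\<in>distinct_index_lists 6 N. crossing_indicator L \<delta> (X (zs!0)) (X (zs!1)) (X (zs!2)) (X (zs!3))
        * stress_term W L w (X (zs!4)) (X (zs!5)))"
    by (intro sum.cong refl) (simp add: a_def b_def distinct_index_lists_def nth_drop)
  moreover have "(\<Sum>zs\<in>distinct_index_lists 5 N. a (take 4 zs) * b [zs!0, zs!4])
      = (\<Sum>zs\<in>distinct_index_lists 5 N. crossing_indicator L \<delta> (X (zs!0)) (X (zs!1)) (X (zs!2)) (X (zs!3))
        * stress_term W L w (X (zs!0)) (X (zs!4)))"
    by (simp add: a_def b_def)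
  moreover have "cr_bar L \<delta> (N, X) * stress_on W L w (N, X)
      = 1/16 * ((\<Sum>xs\<in>distinct_index_lists 4 N. a xs) * (\<Sum>ys\<in>distinct_index_lists 2 N. b ys))"
    by (simp add: cr_bar_eq_sum_distinct_index_lists stress_on_def a_def b_def)
  moreover have "(\<Sum>zs\<in>distinct_index_lists 6 N. a (take 4 zs) * b (drop 4 zs))
      + (\<Sum>zs\<in>distinct_index_lists 5 N. a (take 4 zs) * b [zs!0, zs!4])
      \<le> (\<Sum>xs\<in>distinct_index_lists 4 N. a xs) * (\<Sum>ys\<in>distinct_index_lists 2 N. b ys)"
    by (rule sum_distinct_index_lists_4_times_2_ge)
      (simp_all add: a_def b_def crossing_indicator_nonneg stress_term_nonneg)
  ultimately show ?thesis by simp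
qed

lemma nn_integral_cr_bar_mult_stress_on_ge:
  "ennreal (t ^ 6 / 16) * ((\<integral>\<^sup>+v. crossing_integral W L \<delta> v \<partial>U) * (\<integral>\<^sup>+v. stress_integral W L w v \<partial>U))
   + ennreal (t ^ 5 / 16) * (\<integral>\<^sup>+v. crossing_integral W L \<delta> v * stress_integral W L w v \<partial>U)
   \<le> (\<integral>\<^sup>+\<omega>. ennreal (cr_bar L \<delta> \<omega> * stress_on W L w \<omega>) \<partial>ppp t W)"
proof -
  let ?\<psi>6 = "\<lambda>y::nat \<Rightarrow> 'a. crossing_indicator L \<delta> (y 0) (y 1) (y 2) (y 3) * stress_term W L w (y 4) (y 5)"
  let ?\<psi>5 = "\<lambda>y::nat \<Rightarrow> 'a. crossing_indicator L \<delta> (y 0) (y 1) (y 2) (y 3) * stress_term W L w (y 0) (y 4)"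
  let ?S6 = "\<lambda>\<omega>. 1/16 * (\<Sum>zs\<in>distinct_index_lists 6 (fst \<omega>). ?\<psi>6 (\<lambda>i\<in>{..<6}. snd \<omega> (zs!i)))"
  let ?S5 = "\<lambda>\<omega>. 1/16 * (\<Sum>zs\<in>distinct_index_lists 5 (fst \<omega>). ?\<psi>5 (\<lambda>i\<in>{..<5}. snd \<omega> (zs!i)))"
  have nonneg: "0 \<le> ?\<psi>6 y" "0 \<le> ?\<psi>5 y" for y
    by (intro mult_nonneg_nonneg crossing_indicator_nonneg stress_term_nonneg)+
  have [measurable]: "?\<psi>6 \<in> borel_measurable (PiM {..<6} (\<lambda>_. U))"
    "?\<psi>5 \<in> borel_measurable (PiM {..<5} (\<lambda>_. U))"
    by measurable
  have "(\<integral>\<^sup>+\<omega>. ennreal (?S6 \<omega>) \<partial>ppp t W) = ennreal (1/16 * t ^ 6) * (\<integral>\<^sup>+y. ennreal (?\<psi>6 y) \<partial>PiM {..<6} (\<lambda>_. U))"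
    by (rule nn_integral_ppp_scaled_sum_distinct_index_lists[where \<psi>="?\<psi>6"])
      (auto intro!: mult_nonneg_nonneg crossing_indicator_nonneg stress_term_nonneg)
  moreover have "(\<integral>\<^sup>+\<omega>. ennreal (?S5 \<omega>) \<partial>ppp t W) = ennreal (1/16 * t ^ 5) * (\<integral>\<^sup>+y. ennreal (?\<psi>5 y) \<partial>PiM {..<5} (\<lambda>_. U))"
    by (rule nn_integral_ppp_scaled_sum_distinct_index_lists[where \<psi>="?\<psi>5"])
      (auto intro!: mult_nonneg_nonneg crossing_indicator_nonneg stress_term_nonneg)
  ultimately have "ennreal (t ^ 6 / 16) * ((\<integral>\<^sup>+v. crossing_integral W L \<delta> v \<partial>U) * (\<integral>\<^sup>+v. stress_integral W L w v \<partial>U))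
      + ennreal (t ^ 5 / 16) * (\<integral>\<^sup>+v. crossing_integral W L \<delta> v * stress_integral W L w v \<partial>U)
      = (\<integral>\<^sup>+\<omega>. ennreal (?S6 \<omega>) \<partial>ppp t W) + (\<integral>\<^sup>+\<omega>. ennreal (?S5 \<omega>) \<partial>ppp t W)"
    unfolding nn_integral_PiM_crossing_disjoint_stress nn_integral_PiM_crossing_sharing_stress
    by (simp add: mult.commute)
  also have "\<dots> = (\<integral>\<^sup>+\<omega>. ennreal (?S6 \<omega>) + ennreal (?S5 \<omega>) \<partial>ppp t W)"
    by (rule nn_integral_add[symmetric]) measurable
  also have "\<dots> = (\<integral>\<^sup>+\<omega>. ennreal (?S6 \<omega> + ?S5 \<omega>) \<partial>ppp t W)"
    by (intro nn_integral_cong ennreal_plus[symmetric] mult_nonneg_nonneg sum_nonneg nonneg) simp_all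
  also have "\<dots> \<le> (\<integral>\<^sup>+\<omega>. ennreal (cr_bar L \<delta> \<omega> * stress_on W L w \<omega>) \<partial>ppp t W)"
  proof (intro nn_integral_mono ennreal_leI)
    fix \<omega> :: "nat \<times> (nat \<Rightarrow> 'a)"
    show "?S6 \<omega> + ?S5 \<omega> \<le> cr_bar L \<delta> \<omega> * stress_on W L w \<omega>"
      using cr_bar_mult_stress_on_ge[where N="fst \<omega>" and X="snd \<omega>"] by simp
  qed
  finally show ?thesis .
qed

lemma I_W_eq_crossing_integral: "I_W W L \<delta> v = enn2real (crossing_integral W L \<delta> v)"
proof -
  define F3 where "F3 b c = (\<integral>\<^sup>+d. ennreal (crossing_indicator L \<delta> v b c d) \<partial>U)" for b c
  define F2 where "F2 b = (\<integral>\<^sup>+c. F3 b c \<partial>U)" for b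
  have F3_le: "F3 b c \<le> 1" for b c
    unfolding F3_def by (rule nn_integral_U_le_1) (simp add: crossing_indicator_le_1)
  have F2_le: "F2 b \<le> 1" for b
    unfolding F2_def by (rule nn_integral_U_le_1) (rule F3_le)
  have F3_finite: "F3 b c \<noteq> \<top>" and F2_finite: "F2 b \<noteq> \<top>" for b c
    using F3_le[of b c] F2_le[of b] by (auto simp: top_unique)
  have "I_W W L \<delta> v = (LINT b:W|lborel. LINT c:W|lborel. LINT d:W|lborel. crossing_indicator L \<delta> v b c d)"
    by (simp add: I_W_def crossing_indicator_def)
  also have "\<dots> = (LINT b:W|lborel. LINT c:W|lborel. enn2real (F3 b c))"
    unfolding F3_def
    by (subst set_integral_eq_nn_integral_U) (simp_all add: crossing_indicator_nonneg)
  also have "\<dots> = (LINT b:W|lborel. enn2real (F2 b))"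
    using F3_finite
    by (subst set_integral_eq_nn_integral_U) (simp_all add: F2_def F3_def ennreal_enn2real_if)
  also have "\<dots> = enn2real (crossing_integral W L \<delta> v)"
    using F2_finite
    by (subst set_integral_eq_nn_integral_U)
      (simp_all add: F2_def F3_def crossing_integral_def ennreal_enn2real_if)
  finally show ?thesis .
qed

lemma set_integral_stress_eq_stress_integral:
  assumes "v \<in> W"
  shows "(LINT v1:W|lborel. w v v1 * (norm (v - v1) - norm (proj L v - proj L v1))\<^sup>2)
    = enn2real (stress_integral W L w v)"
proof -
  have "(LINT v1:W|lborel. w v v1 * (norm (v - v1) - norm (proj L v - proj L v1))\<^sup>2)
      = (LINT v1:W|lborel. stress_term W L w v v1)"
    using assms by (intro set_lebesgue_integral_cong) (auto simp: stress_term_def)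
  also have "\<dots> = enn2real (stress_integral W L w v)"
    unfolding stress_integral_def
    by (rule set_integral_eq_nn_integral_U) (simp_all add: stress_term_nonneg)
  finally show ?thesis .
qed

lemma set_integral_I_W_mult_stress_le:
  assumes finite: "(\<integral>\<^sup>+v. crossing_integral W L \<delta> v * stress_integral W L w v \<partial>U) < \<top>"
  shows "(LINT v:W|lborel. I_W W L \<delta> v *
      (LINT v1:W|lborel. w v v1 * (norm (v - v1) - norm (proj L v - proj L v1))\<^sup>2))
    \<le> enn2real (\<integral>\<^sup>+v. crossing_integral W L \<delta> v * stress_integral W L w v \<partial>U)"
proof -
  have "(LINT v:W|lborel. I_W W L \<delta> v *
        (LINT v1:W|lborel. w v v1 * (norm (v - v1) - norm (proj L v - proj L v1))\<^sup>2))
      = (LINT v:W|lborel. enn2real (crossing_integral W L \<delta> v) * enn2real (stress_integral W L w v))"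
    by (intro set_lebesgue_integral_cong)
      (simp_all add: I_W_eq_crossing_integral set_integral_stress_eq_stress_integral)
  also have "\<dots> = enn2real (\<integral>\<^sup>+v. ennreal (enn2real (crossing_integral W L \<delta> v)
      * enn2real (stress_integral W L w v)) \<partial>U)"
    by (rule set_integral_eq_nn_integral_U) simp_all
  also have "\<dots> \<le> enn2real (\<integral>\<^sup>+v. crossing_integral W L \<delta> v * stress_integral W L w v \<partial>U)"
    by (intro enn2real_mono[OF nn_integral_mono finite])
      (simp add: ennreal_mult ennreal_enn2real_if mult_mono)
  finally show ?thesis .
qed

lemma integrable_stress_on_square:
  assumes "integrable (ppp t W) (\<lambda>\<omega>. (stress L w \<omega>)\<^sup>2)"
  shows "integrable (ppp t W) (\<lambda>\<omega>. (stress_on W L w \<omega>)\<^sup>2)"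
proof (rule integrable_cong_AE_imp[OF assms])
  show "AE \<omega> in ppp t W. (stress L w \<omega>)\<^sup>2 = (stress_on W L w \<omega>)\<^sup>2"
    using AE_stress_eq_stress_on by eventually_elim simp
qed simp

lemma cov_stress_eq_cov_stress_on:
  assumes "X \<in> borel_measurable (ppp t W)" "stress L w \<in> borel_measurable (ppp t W)"
  shows "cov (ppp t W) X (stress L w) = cov (ppp t W) X (stress_on W L w)"
  using AE_stress_eq_stress_on assms by (intro cov_cong_AE) simp_all

lemma integrable_cr_bar: "integrable (ppp t W) (cr_bar L \<delta>)"
  by (rule ppp.square_integrable_imp_integrable[OF borel_measurable_cr_bar integrable_cr_bar_square])

lemma integral_cr_bar:
  "ennreal (\<integral>\<omega>. cr_bar L \<delta> \<omega> \<partial>ppp t W) = ennreal (t ^ 4 / 8) * (\<integral>\<^sup>+v. crossing_integral W L \<delta> v \<partial>U)"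
  unfolding nn_integral_cr_bar[symmetric]
  by (rule nn_integral_eq_integral[symmetric, OF integrable_cr_bar]) (simp add: cr_bar_nonneg)

context
  assumes stress_square: "integrable (ppp t W) (\<lambda>\<omega>. (stress_on W L w \<omega>)\<^sup>2)"
begin

lemma integrable_stress_on: "integrable (ppp t W) (stress_on W L w)"
  by (rule ppp.square_integrable_imp_integrable[OF borel_measurable_stress_on stress_square])

lemma integrable_cr_bar_mult_stress_on: "integrable (ppp t W) (\<lambda>\<omega>. cr_bar L \<delta> \<omega> * stress_on W L w \<omega>)"
  by (rule integrable_mult_of_square_integrable[OF borel_measurable_cr_bar borel_measurable_stress_on
        integrable_cr_bar_square stress_square])

lemma integral_stress_on:
  "ennreal (\<integral>\<omega>. stress_on W L w \<omega> \<partial>ppp t W) = ennreal (t ^ 2 / 2) * (\<integral>\<^sup>+v. stress_integral W L w v \<partial>U)"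
  unfolding nn_integral_stress_on[symmetric]
  by (rule nn_integral_eq_integral[symmetric, OF integrable_stress_on]) (simp add: stress_on_nonneg)

lemma integral_cr_bar_mult_stress_on_ge:
  fixes \<delta> :: real
  defines "C \<equiv> \<integral>\<^sup>+v. crossing_integral W L \<delta> v * stress_integral W L w v \<partial>U"
  shows "C < \<top>"
    and "(\<integral>\<omega>. cr_bar L \<delta> \<omega> \<partial>ppp t W) * (\<integral>\<omega>. stress_on W L w \<omega> \<partial>ppp t W) + t ^ 5 / 16 * enn2real C
      \<le> (\<integral>\<omega>. cr_bar L \<delta> \<omega> * stress_on W L w \<omega> \<partial>ppp t W)"
proof -
  define EF EH EFH where "EF = (\<integral>\<omega>. cr_bar L \<delta> \<omega> \<partial>ppp t W)" and "EH = (\<integral>\<omega>. stress_on W L w \<omega> \<partial>ppp t W)"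
    and "EFH = (\<integral>\<omega>. cr_bar L \<delta> \<omega> * stress_on W L w \<omega> \<partial>ppp t W)"
  have nonneg: "0 \<le> EF" "0 \<le> EH" "0 \<le> EFH"
    unfolding EF_def EH_def EFH_def by (simp_all add: cr_bar_nonneg stress_on_nonneg)
  have "ennreal (t ^ 6 / 16) = ennreal (t ^ 4 / 8) * ennreal (t ^ 2 / 2)"
    using t_pos by (simp flip: ennreal_mult add: power_add[symmetric])
  then have "ennreal (t ^ 6 / 16) * ((\<integral>\<^sup>+v. crossing_integral W L \<delta> v \<partial>U) * (\<integral>\<^sup>+v. stress_integral W L w v \<partial>U))
      = ennreal EF * ennreal EH"
    unfolding EF_def EH_def integral_cr_bar integral_stress_on by (simp only: mult_ac)
  moreover have "(\<integral>\<^sup>+\<omega>. ennreal (cr_bar L \<delta> \<omega> * stress_on W L w \<omega>) \<partial>ppp t W) = ennreal EFH"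
    unfolding EFH_def by (rule nn_integral_eq_integral[OF integrable_cr_bar_mult_stress_on])
      (simp add: cr_bar_nonneg stress_on_nonneg)
  ultimately have lower: "ennreal (EF * EH) + ennreal (t ^ 5 / 16) * C \<le> ennreal EFH"
    using nn_integral_cr_bar_mult_stress_on_ge[of \<delta>] unfolding C_def ennreal_mult[OF nonneg(1,2)]
    by simp
  then have "ennreal (t ^ 5 / 16) * C \<le> ennreal EFH"
    by (rule order_trans[OF add_increasing[OF zero_le order_refl]])
  then have "ennreal (t ^ 5 / 16) * C < \<top>"
    using le_less_trans ennreal_less_top by blast
  then show C_finite: "C < \<top>"
    using t_pos by (auto simp: ennreal_mult_less_top)
  have "ennreal (t ^ 5 / 16 * enn2real C) = ennreal (t ^ 5 / 16) * C"
    using C_finite t_pos by (subst ennreal_mult) auto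
  then have sum: "ennreal (EF * EH + t ^ 5 / 16 * enn2real C)
      = ennreal (EF * EH) + ennreal (t ^ 5 / 16) * C"
    using t_pos nonneg by (simp add: ennreal_plus)
  show "EF * EH + t ^ 5 / 16 * enn2real C \<le> EFH"
    using lower nonneg(3) by (simp only: ennreal_le_iff flip: sum)
qed

lemma cov_cr_bar_stress_on_ge:
  fixes \<delta> :: real
  defines "C \<equiv> \<integral>\<^sup>+v. crossing_integral W L \<delta> v * stress_integral W L w v \<partial>U"
  shows "C < \<top>" and "t ^ 5 / 16 * enn2real C \<le> cov (ppp t W) (cr_bar L \<delta>) (stress_on W L w)"
proof -
  show "C < \<top>" unfolding C_def by (rule integral_cr_bar_mult_stress_on_ge(1))
  show "t ^ 5 / 16 * enn2real C \<le> cov (ppp t W) (cr_bar L \<delta>) (stress_on W L w)"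
    using integral_cr_bar_mult_stress_on_ge(2)[of \<delta>]
      cov_eq_integral_mult_diff[OF prob_space_ppp integrable_cr_bar[of \<delta>] integrable_stress_on
        integrable_cr_bar_mult_stress_on[of \<delta>]]
    unfolding C_def by linarith
qed

end

end

theorem mainTheorem10:
  fixes W :: "'a::euclidean_space set" and L :: "'a set"
    and t \<delta> :: real and w :: "'a \<Rightarrow> 'a \<Rightarrow> real"
  assumes "DIM('a) \<ge> 2"
    and "compact W" and "convex W" and "emeasure lborel W = 1"
    and "t > 0" and "\<delta> > 0"
    and "subspace L" and "dim L = 2"
    and "\<forall>x\<in>W. \<forall>y\<in>W. w x y > 0"
    and "(\<lambda>p. w (fst p) (snd p)) \<in> borel_measurable (restrict_space borel (W \<times> W))"
    and "stress L w \<in> borel_measurable (ppp t W)"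
    and "integrable (ppp t W) (\<lambda>\<omega>. (stress L w \<omega>)\<^sup>2)"
  shows "cov (ppp t W) (cr_bar L \<delta>) (stress L w)
           \<ge> t ^ 5 / 16 * (LINT v:W|lborel. I_W W L \<delta> v *
                (LINT v1:W|lborel. w v v1 * (norm (v - v1) - norm (proj L v - proj L v1))\<^sup>2))"
proof -
  interpret stress_window W t L w
    using assms by unfold_locales (simp_all add: borel_closed compact_imp_closed)
  let ?C = "\<integral>\<^sup>+v. crossing_integral W L \<delta> v * stress_integral W L w v \<partial>U"
  have "?C < \<top>" and cov: "t ^ 5 / 16 * enn2real ?C \<le> cov (ppp t W) (cr_bar L \<delta>) (stress L w)"
    using cov_cr_bar_stress_on_ge[OF integrable_stress_on_square[OF assms(12)], of \<delta>]
    by (simp_all add: cov_stress_eq_cov_stress_on assms(11))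
  have "(LINT v:W|lborel. I_W W L \<delta> v *
        (LINT v1:W|lborel. w v v1 * (norm (v - v1) - norm (proj L v - proj L v1))\<^sup>2))
      \<le> enn2real ?C"
    using \<open>?C < \<top>\<close> by (rule set_integral_I_W_mult_stress_le)
  then have "t ^ 5 / 16 * (LINT v:W|lborel. I_W W L \<delta> v *
        (LINT v1:W|lborel. w v v1 * (norm (v - v1) - norm (proj L v - proj L v1))\<^sup>2))
      \<le> t ^ 5 / 16 * enn2real ?C"
    by (rule mult_left_mono) (use assms(5) in simp)
  with cov show ?thesis by linarith
qed

end
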